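(* Let $k=-\frac{n}{2}(n-2)$. The map $\varphi\colon\Sigma^{2pk}E_*\to E_*\langle\det\rangle$ defined by $\varphi(x)=x\delta^k$ is an isomorphism of $F$--equivariant $E_*$--modules.
   Context: Let $p$ be an odd prime and $n=p-1$. Let $E=E_n$ be Morava $E$--theory with $E_*=\mathbb{W}[\![u_1,\dots,u_{n-1}]\!][u^{\pm1}]$, $\mathbb{W}=W(\mathbb{F}_{p^n})$, associated to the Honda formal group law of height $n$, with its action of the Morava stabilizer group $\mathbb{G}_n=\mathbb{S}_n\rtimes\mathrm{Gal}(\mathbb{F}_{p^n}/\mathbb{F}_p)$ ($\mathbb{S}_n$ the automorphism group of the Honda formal group law over $\mathbb{F}_{p^n}$). Let $\det\colon\mathbb{G}_n\to\mathbb{Z}_p^\times$ be the determinant (reduced norm) homomorphism. $E_*\langle\det\rangle$ denotes $E_*$ with the twisted action $\widehat{g}(x)=g(x)\det(g)$. Let $\omega\in\mathbb{W}$ be a primitive $(p^n-1)$--st root of unity; identifying $\mathbb{W}^\times$ with a subgroup of $\mathbb{S}_n$, let $\tau=\omega^{(p^n-1)/n^2}\in\mathbb{S}_n$, and write $\eta=\omega^{(p^n-1)/n^2}$ when viewed as an element of $\mathbb{W}\subseteq E_0$; then $\det(\tau)=\eta^{(p^n-1)/n}$. $F=\langle\zeta,\tau\rangle\cong C_p\rtimes C_{n^2}$ is a maximal finite subgroup of $\mathbb{S}_n$ with $\zeta$ of order $p$, $\tau^{-1}\zeta\tau=\zeta^e$ for $e$ a generator of $(\mathbb{Z}/p)^\times$,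 and $\det(\zeta)=1$. The element $\delta\in E_{2p}$ is the unit, invariant under $C_p=\langle\zeta\rangle$, appearing in the Hopkins--Miller computation $\widehat{H}^*(C_p,E_* )\cong\mathbb{F}_{p^n}[a,b^{\pm1},\delta^{\pm1}]/(a^2)$; it satisfies $\tau(\delta)=\eta^{-p}\delta$. *)

theory Defs
  imports Main "HOL-Algebra.Group" "HOL-Algebra.Generated_Groups" "HOL-Number_Theory.Number_Theory"
begin

text \<open>Integer powers of a unit u with chosen inverse u' (u * u' = 1).\<close>
definition upow :: "'e::comm_ring_1 \<Rightarrow> 'e \<Rightarrow> int \<Rightarrow> 'e" where
  "upow u u' k = (if 0 \<le> k then u ^ nat k else u' ^ nat (- k))"

definition twisted_act :: "('g \<Rightarrow> 'e::comm_ring_1 \<Rightarrow> 'e) \<Rightarrow> ('g \<Rightarrow> 'e) \<Rightarrow> 'g \<Rightarrow> 'e \<Rightarrow> 'e" where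
  "twisted_act act detE g x = act g x * detE g"

text \<open>The exponent k = -(n/2)(n-2) (n = p - 1 is even).\<close>
definition kexp :: "nat \<Rightarrow> int" where
  "kexp n = - int (n * (n - 2) div 2)"

end

theory Submission
  imports Defs
begin

text \<open>Multiplication by the unit \<open>\<delta>\<^sup>k\<close>, of degree \<open>2pk\<close>, is a graded bijection and is
  \<open>E\<^sub>*\<close>-linear. Equivariance amounts to \<open>\<delta>\<^sup>k\<close> being fixed by the twisted action
  \<open>x \<mapsto> g(x) det(g)\<close>. Fixed points of an action are closed under the group operations, so it
  suffices to check the generators: \<open>\<zeta>\<close> fixes \<open>\<delta>\<close> and has determinant 1, while for \<open>\<tau>\<close>, with
  \<open>k = -m\<close>, the condition becomes \<open>\<eta>\<^bsup>pm + (p\<^sup>n - 1)/n\<^esup> = 1\<close>. As \<open>\<eta>\<close> is an \<open>n\<^sup>2\<close>-th root of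
  unity, this follows from \<open>n\<^sup>2 | pm + (p\<^sup>n - 1)/n\<close>, which one reads off the expansion of
  \<open>p\<^sup>n = (1 + n)\<^sup>n\<close> up to order \<open>n\<^sup>3\<close>.\<close>

lemma one_plus_power_mod_cube:
  "\<exists>q. (1 + n) ^ j = 1 + j * n + (j choose 2) * n\<^sup>2 + q * (n::nat) ^ 3"
proof (induction j)
  case 0
  show ?case by simp
next
  case (Suc j)
  then obtain q where q: "(1 + n) ^ j = 1 + j * n + (j choose 2) * n\<^sup>2 + q * n ^ 3" by blast
  have choose: "Suc j choose 2 = (j choose 2) + j"
    using binomial_Suc_Suc[of j 1] by (simp add: numeral_2_eq_2)
  have "(1 + n) ^ Suc j = (1 + j * n + (j choose 2) * n\<^sup>2 + q * n ^ 3) * (1 + n)"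
    using q by simp
  also have "\<dots> = 1 + Suc j * n + (Suc j choose 2) * n\<^sup>2 + (q + q * n + (j choose 2)) * n ^ 3"
    unfolding choose by (simp add: algebra_simps power2_eq_square power3_eq_cube)
  finally show ?case by blast
qed

lemma sq_dvd_twist_exponent:
  assumes "even n" "n \<ge> 2"
  shows "n\<^sup>2 dvd (n + 1) * (n * (n - 2) div 2) + ((n + 1) ^ n - 1) div n"
proof -
  obtain t where t: "n = 2 * t" using assms by blast
  then obtain s where s: "t = Suc s" using assms by (cases t) auto
  obtain q where q: "(1 + n) ^ n = 1 + n * n + (n choose 2) * n\<^sup>2 + q * n ^ 3"
    using one_plus_power_mod_cube by blast
  have "n choose 2 = t * (2 * t - 1)" unfolding choose_two t by simp
  then have "(n + 1) ^ n - 1 = n * (n + t * (2 * t - 1) * n + q * n\<^sup>2)"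
    using q by (simp add: algebra_simps power2_eq_square power3_eq_cube)
  then have norm: "((n + 1) ^ n - 1) div n = n + t * (2 * t - 1) * n + q * n\<^sup>2"
    using assms by simp
  have half: "n * (n - 2) div 2 = t * (n - 2)" unfolding t by simp
  have "(n + 1) * (n * (n - 2) div 2) + ((n + 1) ^ n - 1) div n = n\<^sup>2 * (2 * t - 1 + q)"
    unfolding norm half unfolding t s by (simp add: algebra_simps power2_eq_square)
  then show ?thesis by simp
qed

lemma action_fixed_on_generate:
  assumes "group G" "S \<subseteq> carrier G"
    and act_one: "act \<one>\<^bsub>G\<^esub> c = c"
    and act_mult: "\<And>g h x. g \<in> carrier G \<Longrightarrow> h \<in> carrier G \<Longrightarrow>
                     act (g \<otimes>\<^bsub>G\<^esub> h) x = act g (act h x)"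
    and fixed: "\<And>s. s \<in> S \<Longrightarrow> act s c = c"
    and "g \<in> generate G S"
  shows "act g c = c"
  using \<open>g \<in> generate G S\<close>
proof (induction rule: generate.induct)
  case one
  show ?case by (rule act_one)
next
  case (incl h)
  then show ?case by (rule fixed)
next
  case (inv h)
  then have h: "h \<in> carrier G" using \<open>S \<subseteq> carrier G\<close> by blast
  have "c = act (inv\<^bsub>G\<^esub> h \<otimes>\<^bsub>G\<^esub> h) c"
    using group.l_inv[OF \<open>group G\<close> h] act_one by simp
  also have "\<dots> = act (inv\<^bsub>G\<^esub> h) c"
    using act_mult[OF group.inv_closed[OF \<open>group G\<close> h] h] fixed[OF inv.hyps] by simp
  finally show ?case by simp
next
  case (eng h1 h2)
  have "h1 \<in> carrier G" "h2 \<in> carrier G"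
    using eng.hyps group.generate_in_carrier[OF \<open>group G\<close> \<open>S \<subseteq> carrier G\<close>] by auto
  then show ?case using act_mult eng.IH by simp
qed

lemma twisted_act_mult:
  fixes act :: "'g \<Rightarrow> 'e::comm_ring_1 \<Rightarrow> 'e"
  assumes "g \<in> carrier G" "h \<in> carrier G"
    and "act (g \<otimes>\<^bsub>G\<^esub> h) x = act g (act h x)"
    and "act g (act h x * detE h) = act g (act h x) * act g (detE h)"
    and "detE (g \<otimes>\<^bsub>G\<^esub> h) = detE g * detE h"
    and "act g (detE h) = detE h"
  shows "twisted_act act detE (g \<otimes>\<^bsub>G\<^esub> h) x =
         twisted_act act detE g (twisted_act act detE h x)"
  using assms unfolding twisted_act_def by (simp add: algebra_simps)

lemma multiplicative_inverse_power:
  fixes f :: "'e::comm_ring_1 \<Rightarrow> 'e"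
  assumes f_mult: "\<And>x y. f (x * y) = f x * f y" and f_one: "f 1 = 1"
    and inverse: "\<delta> * \<delta>' = 1" and eigen: "a * f \<delta> = \<delta>"
  shows "f (\<delta>' ^ m) = a ^ m * \<delta>' ^ m"
proof -
  \<comment> \<open>both \<open>f \<delta>'\<close> and \<open>a \<delta>'\<close> are inverse to \<open>f \<delta>\<close>\<close>
  have "f \<delta>' = f \<delta>' * (a * \<delta>' * f \<delta>)"
    using eigen inverse by (simp add: algebra_simps)
  also have "\<dots> = a * \<delta>' * (f \<delta> * f \<delta>')" by (simp add: algebra_simps)
  also have "f \<delta> * f \<delta>' = 1" using f_mult[of \<delta> \<delta>'] f_one inverse by simp
  finally have "f \<delta>' = a * \<delta>'" by simp
  moreover have "f (x ^ j) = f x ^ j" for x j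
    by (induction j) (simp_all add: f_one f_mult)
  ultimately show ?thesis by (simp add: power_mult_distrib)
qed

lemma power_mem_graded:
  fixes E :: "int \<Rightarrow> 'a::comm_semiring_1 set"
  assumes E_mult: "\<And>i j x y. x \<in> E i \<Longrightarrow> y \<in> E j \<Longrightarrow> x * y \<in> E (i + j)"
    and E_one: "1 \<in> E 0" and "x \<in> E i"
  shows "x ^ j \<in> E (int j * i)"
proof (induction j)
  case 0
  show ?case using E_one by simp
next
  case (Suc j)
  then show ?case using E_mult[OF \<open>x \<in> E i\<close> Suc] by (simp add: algebra_simps)
qed

lemma bij_mult_unit:
  fixes u v :: "'e::comm_ring_1"
  assumes "u * v = 1"
  shows "bij (\<lambda>x. x * u)"
  by (rule bij_betwI[where g = "\<lambda>x. x * v"]) (simp_all add: assms mult.assoc mult.commute[of v])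

lemma bij_betw_mult_unit_graded:
  fixes u v :: "'e::comm_ring_1" and E :: "int \<Rightarrow> 'e set"
  assumes E_mult: "\<And>i j x y. x \<in> E i \<Longrightarrow> y \<in> E j \<Longrightarrow> x * y \<in> E (i + j)"
    and "u \<in> E a" "v \<in> E (- a)" "u * v = 1"
  shows "bij_betw (\<lambda>x. x * u) (E (d - a)) (E d)"
proof (rule bij_betwI[where g = "\<lambda>x. x * v"])
  show "(\<lambda>x. x * u) \<in> E (d - a) \<rightarrow> E d"
    using E_mult[OF _ \<open>u \<in> E a\<close>] by fastforce
  show "(\<lambda>x. x * v) \<in> E d \<rightarrow> E (d - a)"
    using E_mult[OF _ \<open>v \<in> E (- a)\<close>] by fastforce
qed (simp_all add: \<open>u * v = 1\<close> mult.assoc mult.commute[of v])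

theorem lemma4p16:
  fixes p n :: nat
    and F :: "('g, 'b) monoid_scheme"
    and zeta tau :: 'g and e :: nat
    and act :: "'g \<Rightarrow> 'e::comm_ring_1 \<Rightarrow> 'e"
    and detE :: "'g \<Rightarrow> 'e"
    and hom :: "int \<Rightarrow> 'e set"
    and \<delta> \<delta>' \<eta> :: 'e
  assumes p: "prime p" "odd p" and n: "n = p - 1"
    (* grading of E_* *)
    and hom_add: "\<And>d x y. x \<in> hom d \<Longrightarrow> y \<in> hom d \<Longrightarrow> x + y \<in> hom d \<and> - x \<in> hom d"
    and hom_zero: "\<And>d. 0 \<in> hom d"
    and hom_mult: "\<And>i j x y. x \<in> hom i \<Longrightarrow> y \<in> hom j \<Longrightarrow> x * y \<in> hom (i + j)"
    and hom_one: "1 \<in> hom 0"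
    (* the finite group F = <zeta, tau> = C_p semidirect C_{n^2} *)
    and grp: "group F"
    and gens: "zeta \<in> carrier F" "tau \<in> carrier F"
    and F_gen: "carrier F = generate F {zeta, tau}"
    and ord_zeta: "group.ord F zeta = p" and ord_tau: "group.ord F tau = n ^ 2"
    and e_gen: "ord p e = p - 1"
    and conj: "inv\<^bsub>F\<^esub> tau \<otimes>\<^bsub>F\<^esub> zeta \<otimes>\<^bsub>F\<^esub> tau = zeta [^]\<^bsub>F\<^esub> e"
    (* action of F on E_* by graded ring automorphisms *)
    and act_one: "\<And>x. act \<one>\<^bsub>F\<^esub> x = x"
    and act_mult: "\<And>g h x. g \<in> carrier F \<Longrightarrow> h \<in> carrier F \<Longrightarrow>
                     act (g \<otimes>\<^bsub>F\<^esub> h) x = act g (act h x)"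
    and act_add: "\<And>g x y. g \<in> carrier F \<Longrightarrow> act g (x + y) = act g x + act g y"
    and act_times: "\<And>g x y. g \<in> carrier F \<Longrightarrow> act g (x * y) = act g x * act g y"
    and act_1: "\<And>g. g \<in> carrier F \<Longrightarrow> act g 1 = 1"
    and act_hom: "\<And>g d x. g \<in> carrier F \<Longrightarrow> x \<in> hom d \<Longrightarrow> act g x \<in> hom d"
    (* the determinant, viewed in E_0 *)
    and det_mult: "\<And>g h. g \<in> carrier F \<Longrightarrow> h \<in> carrier F \<Longrightarrow>
                     detE (g \<otimes>\<^bsub>F\<^esub> h) = detE g * detE h"
    and det_one: "detE \<one>\<^bsub>F\<^esub> = 1"
    and det_hom: "\<And>g. g \<in> carrier F \<Longrightarrow> detE g \<in> hom 0"
    and det_fixed: "\<And>g h. g \<in> carrier F \<Longrightarrow> h \<in> carrier F \<Longrightarrow> act g (detE h) = detE h"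
    (* eta: a primitive n^2-th root of unity in W, and det(tau) = eta^((p^n-1)/n) *)
    and eta_hom: "\<eta> \<in> hom 0"
    and eta_root: "\<eta> ^ (n ^ 2) = 1"
    and eta_prim: "\<And>j. 0 < j \<Longrightarrow> j < n ^ 2 \<Longrightarrow> \<eta> ^ j \<noteq> 1"
    and det_zeta: "detE zeta = 1"
    and det_tau: "detE tau = \<eta> ^ ((p ^ n - 1) div n)"
    (* delta: a unit in E_{2p}, C_p-invariant, with tau(delta) = eta^(-p) delta *)
    and delta_hom: "\<delta> \<in> hom (2 * int p)" and delta'_hom: "\<delta>' \<in> hom (- 2 * int p)"
    and delta_inv: "\<delta> * \<delta>' = 1"
    and zeta_delta: "act zeta \<delta> = \<delta>"
    and tau_delta: "\<eta> ^ p * act tau \<delta> = \<delta>"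
  shows "(let k = kexp n; \<phi> = (\<lambda>x. x * upow \<delta> \<delta>' k) in
           bij \<phi>
         \<and> (\<forall>d. bij_betw \<phi> (hom (d - 2 * int p * k)) (hom d))
         \<and> (\<forall>x y. \<phi> (x + y) = \<phi> x + \<phi> y)
         \<and> (\<forall>a x. \<phi> (a * x) = a * \<phi> x)
         \<and> (\<forall>g \<in> carrier F. \<forall>x. \<phi> (act g x) = twisted_act act detE g (\<phi> x)))"
proof -
  define m where "m = n * (n - 2) div 2"
  have "p \<noteq> 2" using p(2) by auto
  then have "p \<ge> 3" using prime_ge_2_nat[OF p(1)] by linarith
  then have n_even: "even n" "n \<ge> 2" using p(2) n by auto
  have k: "kexp n = - int m" unfolding kexp_def m_def by simp
  have unit: "upow \<delta> \<delta>' (kexp n) = \<delta>' ^ m" unfolding k upow_def by auto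
  have "act zeta (\<delta>' ^ m) = 1 ^ m * \<delta>' ^ m"
    using gens(1) by (intro multiplicative_inverse_power[where \<delta> = \<delta>])
      (simp_all add: act_times act_1 delta_inv zeta_delta)
  then have zeta_fixes: "twisted_act act detE zeta (\<delta>' ^ m) = \<delta>' ^ m"
    by (simp add: twisted_act_def det_zeta)
  have "act tau (\<delta>' ^ m) = (\<eta> ^ p) ^ m * \<delta>' ^ m"
    using gens(2) by (intro multiplicative_inverse_power[where \<delta> = \<delta>])
      (simp_all add: act_times act_1 delta_inv tau_delta)
  then have "twisted_act act detE tau (\<delta>' ^ m) = \<eta> ^ (p * m + (p ^ n - 1) div n) * \<delta>' ^ m"
    by (simp add: twisted_act_def det_tau power_add mult_ac flip: power_mult)
  moreover obtain r where "p * m + (p ^ n - 1) div n = n\<^sup>2 * r"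
    using sq_dvd_twist_exponent[OF n_even] n \<open>p \<ge> 3\<close> unfolding m_def by auto
  ultimately have tau_fixes: "twisted_act act detE tau (\<delta>' ^ m) = \<delta>' ^ m"
    by (simp add: power_mult eta_root)
  have fixes_all: "twisted_act act detE g (\<delta>' ^ m) = \<delta>' ^ m" if "g \<in> carrier F" for g
  proof (rule action_fixed_on_generate[OF grp, of "{zeta, tau}"])
    show "twisted_act act detE \<one>\<^bsub>F\<^esub> (\<delta>' ^ m) = \<delta>' ^ m"
      by (simp add: twisted_act_def act_one det_one)
    show "twisted_act act detE (g \<otimes>\<^bsub>F\<^esub> h) x = twisted_act act detE g (twisted_act act detE h x)"
      if "g \<in> carrier F" "h \<in> carrier F" for g h x
      using that by (intro twisted_act_mult act_mult act_times det_mult det_fixed)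
  qed (use that gens F_gen zeta_fixes tau_fixes in auto)
  have unit_inv: "\<delta>' ^ m * \<delta> ^ m = 1" by (metis delta_inv mult.commute power_mult_distrib power_one)
  have "\<delta>' ^ m \<in> hom (2 * int p * kexp n)" "\<delta> ^ m \<in> hom (- (2 * int p * kexp n))"
    using power_mem_graded[where E = hom, OF hom_mult hom_one delta'_hom, of m]
      power_mem_graded[where E = hom, OF hom_mult hom_one delta_hom, of m]
    unfolding k by (simp_all add: algebra_simps)
  then have "bij_betw (\<lambda>x. x * \<delta>' ^ m) (hom (d - 2 * int p * kexp n)) (hom d)" for d
    using unit_inv by (intro bij_betw_mult_unit_graded[where E = hom, OF hom_mult])
  moreover have "act g x * \<delta>' ^ m = twisted_act act detE g (x * \<delta>' ^ m)" if "g \<in> carrier F" for g x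
    using fixes_all[OF that] act_times[OF that] by (simp add: twisted_act_def mult.assoc)
  ultimately show ?thesis
    using bij_mult_unit[OF unit_inv] unfolding Let_def unit by (simp add: distrib_right mult.assoc)
qed

end
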